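(* Let $d$ and $h$ be positive integers with $d\geq\frac{4}{3}\cdot 2^{2h-1}+h-1$. Let $T$ be the rooted tree of depth $d$ in which the root has exactly $5$ children and every non-root vertex at depth less than $d$ has exactly $4$ children (so $T$ has maximum degree $5$). Let $S$ be a set of $5\cdot 4^{d-h-1}$ leaves of $T$ that contains exactly one descendant of every vertex of depth $d-h$. Then $S$ is an exponential dominating set of $T$; in particular $\gamma_e(T)\leq 5\cdot 4^{d-h-1}$.
   Context: The depth of a vertex in a rooted tree is its distance from the root, and the depth of the tree is the maximum depth of a vertex. For a graph $G$, a set $S\subseteq V(G)$, and vertices $u,v$ with $u\in S$ or $v\in S$, ${\rm dist}_{(G,S)}(u,v)$ is the minimum number of edges of a path $P$ in $G$ between $u$ and $v$ such that $S$ contains exactly one endvertex of $P$ and no internal vertex of $P$, and $\infty$ if no such path exists (so ${\rm dist}_{(G,S)}(u,u)=0$ for $u\in S$). For $u\in V(G)$, $w_{(G,S)}(u)=\sum_{v\in S}(1/2)^{{\rm dist}_{(G,S)}(u,v)-1}$ with $(1/2)^{\infty}=0$. $S$ is an exponential dominating set of $G$ if $w_{(G,S)}(u)\geq 1$ for every $u\in V(G)$, and $\gamma_e(G)$ is the minimum cardinality of an exponential dominating set of $G$. *)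

theory Defs
  imports Complex_Main "HOL-Library.Extended_Nat" "HOL-Library.Sublist"
begin

definition is_path :: "'a set \<Rightarrow> ('a \<Rightarrow> 'a \<Rightarrow> bool) \<Rightarrow> 'a list \<Rightarrow> 'a \<Rightarrow> 'a \<Rightarrow> bool" where
  "is_path V E P u v \<longleftrightarrow> P \<noteq> [] \<and> hd P = u \<and> last P = v \<and> distinct P \<and> set P \<subseteq> V \<and>
     (\<forall>i. Suc i < length P \<longrightarrow> E (P ! i) (P ! Suc i))"

text \<open>S contains exactly one endvertex of P and no internal vertex of P
  (a one-vertex path is admissible iff its vertex lies in S, giving dist(u,u)=0 for u in S).\<close>
definition admissible :: "'a set \<Rightarrow> 'a list \<Rightarrow> bool" where
  "admissible S P \<longleftrightarrow>
     (length P = 1 \<and> hd P \<in> S) \<or>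
     (length P \<ge> 2 \<and> (hd P \<in> S \<longleftrightarrow> last P \<notin> S) \<and> (\<forall>x\<in>set (butlast (tl P)). x \<notin> S))"

text \<open>dist_(G,S)(u,v): minimum number of edges of an admissible path, infinity if none.\<close>
definition dist_GS :: "'a set \<Rightarrow> ('a \<Rightarrow> 'a \<Rightarrow> bool) \<Rightarrow> 'a set \<Rightarrow> 'a \<Rightarrow> 'a \<Rightarrow> enat" where
  "dist_GS V E S u v = (INF P \<in> {P. is_path V E P u v \<and> admissible S P}. enat (length P - 1))"

definition half_pow :: "enat \<Rightarrow> real" where
  "half_pow x = (case x of enat k \<Rightarrow> (1/2::real) powi (int k - 1) | \<infinity> \<Rightarrow> 0)"

definition exp_weight :: "'a set \<Rightarrow> ('a \<Rightarrow> 'a \<Rightarrow> bool) \<Rightarrow> 'a set \<Rightarrow> 'a \<Rightarrow> real" where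
  "exp_weight V E S u = (\<Sum>v\<in>S. half_pow (dist_GS V E S u v))"

definition exp_dominating :: "'a set \<Rightarrow> ('a \<Rightarrow> 'a \<Rightarrow> bool) \<Rightarrow> 'a set \<Rightarrow> bool" where
  "exp_dominating V E S \<longleftrightarrow> S \<subseteq> V \<and> (\<forall>u\<in>V. exp_weight V E S u \<ge> 1)"

definition gamma_e :: "'a set \<Rightarrow> ('a \<Rightarrow> 'a \<Rightarrow> bool) \<Rightarrow> nat" where
  "gamma_e V E = (LEAST n. \<exists>S. exp_dominating V E S \<and> card S = n)"

text \<open>The tree T of depth d: vertices are lists (addresses from the root []);
  the root has children [0],...,[4]; every other vertex xs of length < d has children
  xs@[0],...,xs@[3]. Depth of a vertex = its length.\<close>
definition tree_V :: "nat \<Rightarrow> nat list set" where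
  "tree_V d = {xs. length xs \<le> d \<and> (xs \<noteq> [] \<longrightarrow> hd xs < 5) \<and>
                  (\<forall>i. 0 < i \<and> i < length xs \<longrightarrow> xs ! i < 4)}"

definition tree_E :: "nat \<Rightarrow> nat list \<Rightarrow> nat list \<Rightarrow> bool" where
  "tree_E d xs ys \<longleftrightarrow> xs \<in> tree_V d \<and> ys \<in> tree_V d \<and>
     ((\<exists>c. ys = xs @ [c]) \<or> (\<exists>c. xs = ys @ [c]))"

end

theory Submission
  imports Defs
begin

text \<open>A vertex of S has weight at least 2 from itself. For u \<notin> S at depth k and a leaf v \<in> S,
  the path from u up to their longest common prefix (of length c) and down to v meets S only
  in v, so v contributes at least 2^(1 - (k + d - 2c)). Every vertex x on level n = d - h has
  exactly one selected leaf below it, and charging that leaf to x shows that the weight of u is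
  at least 2^(1-k-d) times the sum of 4^c(u,x) over the level. Among the 5 * 4^(n-1) vertices
  of the level, 4^(n-j) share the first j letters with u (for 1 \<le> j \<le> min k n), so that
  sum is 4^(n-1) (5 + 3 min k n); the hypothesis on d makes the resulting bound at least 1.\<close>

section \<open>Exponential weights in arbitrary graphs\<close>

lemma half_pow_enat: "half_pow (enat n) = 2 / 2 ^ n"
  by (simp add: half_pow_def power_int_diff power_divide)

lemma half_pow_nonneg: "half_pow x \<ge> 0"
  by (cases x) (auto simp: half_pow_enat half_pow_def)

lemma half_pow_ge: "x \<le> enat n \<Longrightarrow> 2 / 2 ^ n \<le> half_pow x"
  by (cases x) (auto simp: half_pow_enat frac_le)

lemma is_pathI:
  assumes "hd P = u" "last P = v" "P \<noteq> []" "distinct P" "set P \<subseteq> V" "successively E P"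
  shows "is_path V E P u v"
  using assms by (simp add: is_path_def successively_conv_nth)

lemma dist_GS_le_length:
  "is_path V E P u v \<Longrightarrow> admissible S P \<Longrightarrow> dist_GS V E S u v \<le> enat (length P - 1)"
  unfolding dist_GS_def by (rule INF_lower) simp

lemma exp_weight_ge_two_if_mem:
  assumes "finite S" "u \<in> S" "u \<in> V"
  shows "2 \<le> exp_weight V E S u"
proof -
  have "is_path V E [u] u u" and "admissible S [u]"
    using assms by (simp_all add: is_path_def admissible_def)
  then have "2 \<le> half_pow (dist_GS V E S u u)"
    using dist_GS_le_length half_pow_ge[of _ 0] by fastforce
  also have "\<dots> \<le> exp_weight V E S u"
    unfolding exp_weight_def using assms half_pow_nonneg by (intro member_le_sum) auto
  finally show ?thesis .
qed

lemma gamma_e_le_card: "exp_dominating V E S \<Longrightarrow> gamma_e V E \<le> card S"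
  unfolding gamma_e_def by (rule Least_le) blast

section \<open>Paths in the tree\<close>

lemma take_in_tree_V: "xs \<in> tree_V d \<Longrightarrow> take i xs \<in> tree_V d"
  unfolding tree_V_def by (auto simp: hd_take)

lemma tree_E_take_Suc:
  "xs \<in> tree_V d \<Longrightarrow> i < length xs \<Longrightarrow> tree_E d (take i xs) (take (Suc i) xs)"
  unfolding tree_E_def using take_in_tree_V[of xs d "Suc i"]
  by (simp add: take_in_tree_V take_Suc_conv_app_nth)

lemma tree_E_sym: "tree_E d xs ys = tree_E d ys xs"
  unfolding tree_E_def by blast

lemma successively_tree_E_takes:
  assumes "xs \<in> tree_V d" "b \<le> Suc (length xs)"
  shows "successively (tree_E d) (map (\<lambda>i. take i xs) [a..<b])"
  using assms by (auto simp: successively_map successively_conv_nth intro: tree_E_take_Suc)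

lemma inj_on_take: "inj_on (\<lambda>i. take i xs) {..length xs}"
  by (rule inj_onI) (metis atMost_iff length_take min.absorb2)

lemma le_length_longest_common_prefix_iff:
  assumes "j \<le> length u"
  shows "j \<le> length (longest_common_prefix u v) \<longleftrightarrow> prefix (take j u) v"
proof
  assume j: "j \<le> length (longest_common_prefix u v)"
  obtain r where "u = longest_common_prefix u v @ r"
    using longest_common_prefix_prefix1 prefixE by metis
  with j have "take j u = take j (longest_common_prefix u v)"
    by (metis take_append diff_is_0_eq take0 append_Nil2)
  then show "prefix (take j u) v"
    using longest_common_prefix_prefix2 take_is_prefix prefix_order.trans by metis
next
  assume "prefix (take j u) v"
  then have "prefix (take j u) (longest_common_prefix u v)"
    by (simp add: longest_common_prefix_max_prefix take_is_prefix)
  then show "j \<le> length (longest_common_prefix u v)"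
    using prefix_length_le assms by fastforce
qed

definition tree_path :: "nat list \<Rightarrow> nat list \<Rightarrow> nat list list" where
  "tree_path u v =
     (let c = length (longest_common_prefix u v)
      in map (\<lambda>i. take i u) (rev [c..<Suc (length u)]) @ map (\<lambda>i. take i v) [Suc c..<Suc (length v)])"

lemma length_tree_path:
  "length (tree_path u v) = Suc (length u + length v - 2 * length (longest_common_prefix u v))"
proof -
  have "length (longest_common_prefix u v) \<le> length u" "length (longest_common_prefix u v) \<le> length v"
    by (simp_all add: prefix_length_le longest_common_prefix_prefix1 longest_common_prefix_prefix2)
  then show ?thesis by (simp add: tree_path_def Let_def del: upt_Suc)
qed

lemma prefix_of_mem_tree_path:
  "x \<in> set (tree_path u v) \<Longrightarrow> prefix x u \<or> prefix x v"
  by (auto simp: tree_path_def Let_def take_is_prefix)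

lemma is_path_tree_path:
  assumes u: "u \<in> tree_V d" and v: "v \<in> tree_V d"
  shows "is_path (tree_V d) (tree_E d) (tree_path u v) u v"
proof -
  define c where "c = length (longest_common_prefix u v)"
  define up where "up = map (\<lambda>i. take i u) (rev [c..<Suc (length u)])"
  define down where "down = map (\<lambda>i. take i v) [Suc c..<Suc (length v)]"
  have P: "tree_path u v = up @ down"
    by (simp add: tree_path_def Let_def c_def up_def down_def del: upt_Suc)
  have cu: "c \<le> length u" and cv: "c \<le> length v"
    by (simp_all add: c_def prefix_length_le longest_common_prefix_prefix1 longest_common_prefix_prefix2)
  have take_c: "take c u = take c v"
    unfolding c_def
    by (metis longest_common_prefix_prefix1 longest_common_prefix_prefix2 prefixE append_eq_conv_conj)
  have last_up: "last up = take c u"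
    using cu by (simp add: up_def rev_map[symmetric] last_rev upt_conv_Cons del: upt_Suc)
  have down_not_prefix: "\<not> prefix x u" if "x \<in> set down" for x
  proof
    assume "prefix x u"
    from that obtain i where i: "c < i" "i \<le> length v" "x = take i v"
      unfolding down_def by (auto simp del: upt_Suc) (metis Suc_le_eq less_Suc_eq_le)
    have "take i u = x"
      using \<open>prefix x u\<close> i by (metis append_eq_conv_conj prefixE length_take min.absorb2)
    moreover have "i \<le> length u"
      using prefix_length_le[OF \<open>prefix x u\<close>] i by simp
    ultimately have "i \<le> c"
      using le_length_longest_common_prefix_iff[of i u v] i(3) take_is_prefix by (simp add: c_def)
    then show False using i by simp
  qed
  have "distinct up"
    unfolding up_def distinct_map by (simp del: upt_Suc) (rule inj_on_subset[OF inj_on_take]; auto)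
  moreover have "distinct down"
    unfolding down_def distinct_map by (simp del: upt_Suc) (rule inj_on_subset[OF inj_on_take]; auto)
  moreover have "set up \<inter> set down = {}"
    using down_not_prefix by (force simp: up_def take_is_prefix simp del: upt_Suc)
  moreover have "successively (tree_E d) up"
  proof -
    have flip: "(\<lambda>x y. tree_E d y x) = tree_E d" by (intro ext) (rule tree_E_sym)
    show ?thesis
      unfolding up_def rev_map[symmetric] successively_rev flip
      by (rule successively_tree_E_takes[OF u order_refl])
  qed
  moreover have "successively (tree_E d) down"
    unfolding down_def by (rule successively_tree_E_takes[OF v order_refl])
  moreover have "tree_E d (last up) (hd down)" if "down \<noteq> []"
  proof -
    have "c < length v"
      using that by (simp add: down_def del: upt_Suc)
    moreover from this have "hd down = take (Suc c) v"
      by (simp add: down_def upt_conv_Cons del: upt_Suc)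
    ultimately show ?thesis
      using tree_E_take_Suc[OF v, of c] take_c last_up by simp
  qed
  moreover have "last (up @ down) = v"
  proof (cases "c = length v")
    case True
    then show ?thesis using take_c last_up by (simp add: down_def)
  next
    case False
    then show ?thesis using cv by (simp add: down_def last_map)
  qed
  moreover have "hd (up @ down) = u" and "up \<noteq> []"
    using cu by (simp_all add: up_def)
  moreover have "set (up @ down) \<subseteq> tree_V d"
    using u v take_in_tree_V by (auto simp: up_def down_def simp del: upt_Suc)
  ultimately show ?thesis
    unfolding P by (intro is_pathI) (auto simp: successively_append_iff)
qed

lemma mem_butlast_tl_distinct:
  assumes "distinct P" "x \<in> set (butlast (tl P))"
  shows "x \<noteq> hd P \<and> x \<noteq> last P"
proof (cases P)
  case (Cons a Q)
  with assms have "Q \<noteq> []" "x \<in> set (butlast Q)" "a \<notin> set Q" by auto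
  moreover have "last Q \<notin> set (butlast Q)"
    using assms(1) \<open>Q \<noteq> []\<close> Cons
    by (metis append_butlast_last_id disjoint_insert(1) distinct.simps(2) distinct_append list.simps(15))
  ultimately show ?thesis
    using Cons by (auto dest: in_set_butlastD)
qed (use assms in simp)

lemma dist_GS_tree_le:
  assumes S: "S \<subseteq> {x \<in> tree_V d. length x = d}"
    and u: "u \<in> tree_V d" "u \<notin> S" and v: "v \<in> S"
  shows "dist_GS (tree_V d) (tree_E d) S u v
           \<le> enat (length u + d - 2 * length (longest_common_prefix u v))"
proof -
  let ?P = "tree_path u v"
  have v_leaf: "v \<in> tree_V d" "length v = d" using S v by auto
  have path: "is_path (tree_V d) (tree_E d) ?P u v"
    using is_path_tree_path u(1) v_leaf(1) .
  have ends: "hd ?P = u" "last ?P = v" "distinct ?P"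
    using path by (simp_all add: is_path_def)
  have "u \<noteq> v" using u(2) v by blast
  then have "length ?P \<noteq> 1"
    using ends by (metis One_nat_def hd_conv_nth last_conv_nth length_0_conv diff_Suc_1 zero_neq_one)
  moreover have "?P \<noteq> []" using path by (simp add: is_path_def)
  ultimately have "length ?P \<ge> 2" by (cases "length ?P") auto
  moreover have "x \<notin> S" if "x \<in> set (butlast (tl ?P))" for x
  proof -
    have "x \<noteq> u" "x \<noteq> v"
      using mem_butlast_tl_distinct[OF ends(3) that] ends by auto
    moreover have "prefix x u \<or> prefix x v"
      using that prefix_of_mem_tree_path by (metis in_set_butlastD list.set_sel(2) tl_Nil)
    ultimately have "strict_prefix x u \<or> strict_prefix x v" by auto
    moreover have "length u \<le> d" using u(1) by (simp add: tree_V_def)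
    ultimately have "length x < d"
      using v_leaf(2) prefix_length_less by fastforce
    then show ?thesis using S by auto
  qed
  ultimately have "admissible S ?P"
    unfolding admissible_def using ends u(2) v by auto
  then have "dist_GS (tree_V d) (tree_E d) S u v \<le> enat (length ?P - 1)"
    using dist_GS_le_length[OF path] by blast
  then show ?thesis
    using v_leaf(2) by (simp add: length_tree_path)
qed

section \<open>Counting vertices on a level\<close>

lemma power_eq_one_plus_geometric_sum:
  "((a::nat) + 1) ^ c = 1 + a * (\<Sum>j<c. (a + 1) ^ j)"
  by (induction c) (simp_all add: algebra_simps)

lemma sum_power_layers:
  fixes c :: "'a \<Rightarrow> nat" and a :: nat
  assumes fin: "finite D" and bound: "\<forall>x\<in>D. c x \<le> m"
  shows "(\<Sum>x\<in>D. (a + 1) ^ c x) = card D + a * (\<Sum>j<m. (a + 1) ^ j * card {x\<in>D. j < c x})"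
proof -
  have layers: "(a + 1) ^ c x = 1 + a * (\<Sum>j<m. if j < c x then (a + 1) ^ j else 0)" if "x \<in> D" for x
  proof -
    have "{j\<in>{..<m}. j < c x} = {..<c x}" using bound that by auto
    then have "(\<Sum>j<m. if j < c x then (a + 1) ^ j else 0) = (\<Sum>j<c x. (a + 1) ^ j)"
      by (simp add: sum.inter_filter[symmetric])
    then show ?thesis using power_eq_one_plus_geometric_sum[of a "c x"] by simp
  qed
  have "(\<Sum>x\<in>D. (a + 1) ^ c x) = (\<Sum>x\<in>D. 1 + a * (\<Sum>j<m. if j < c x then (a + 1) ^ j else 0))"
    using layers by (rule sum.cong[OF refl])
  also have "\<dots> = card D + a * (\<Sum>x\<in>D. \<Sum>j<m. if j < c x then (a + 1) ^ j else 0)"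
    by (simp only: sum.distrib sum_distrib_left[symmetric]) simp
  also have "(\<Sum>x\<in>D. \<Sum>j<m. if j < c x then (a + 1) ^ j else 0) = (\<Sum>j<m. (a + 1) ^ j * card {x\<in>D. j < c x})"
    by (subst sum.swap) (simp add: sum.inter_filter[OF fin, symmetric] mult.commute)
  finally show ?thesis .
qed

definition tree_level :: "nat \<Rightarrow> nat \<Rightarrow> nat list set" where
  "tree_level d n = {x \<in> tree_V d. length x = n}"

lemma card_tree_level_prefix:
  assumes p: "p \<in> tree_V d" "p \<noteq> []" and n: "length p \<le> n" "n \<le> d"
  shows "card {x \<in> tree_level d n. prefix p x} = 4 ^ (n - length p)"
proof -
  let ?W = "{y. set y \<subseteq> {0..<4::nat} \<and> length y = n - length p}"
  have "{x \<in> tree_level d n. prefix p x} = (\<lambda>y. p @ y) ` ?W"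
  proof (intro set_eqI iffI)
    fix x assume "x \<in> {x \<in> tree_level d n. prefix p x}"
    then obtain y where x: "x = p @ y" "p @ y \<in> tree_V d" "length (p @ y) = n"
      by (auto simp: tree_level_def prefix_def)
    have "y ! i < 4" if "i < length y" for i
      using x(2) p(2) that unfolding tree_V_def
      by (auto dest!: spec[of _ "length p + i"] simp: nth_append)
    then have "set y \<subseteq> {0..<4}" by (auto simp: in_set_conv_nth)
    with x show "x \<in> (\<lambda>y. p @ y) ` ?W" by auto
  next
    fix x assume "x \<in> (\<lambda>y. p @ y) ` ?W"
    then obtain y where x: "x = p @ y" and y: "set y \<subseteq> {0..<4}" "length y = n - length p" by auto
    have "(p @ y) ! i < 4" if "0 < i" "i < length (p @ y)" for i
    proof (cases "i < length p")
      case True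
      then show ?thesis using p(1) that by (simp add: tree_V_def nth_append)
    next
      case False
      then have "y ! (i - length p) \<in> set y" using that by simp
      then show ?thesis using False y(1) by (auto simp: nth_append)
    qed
    then have "p @ y \<in> tree_V d"
      using p n y by (simp add: tree_V_def)
    with x y n show "x \<in> {x \<in> tree_level d n. prefix p x}"
      by (simp add: tree_level_def)
  qed
  moreover have "card ((\<lambda>y. p @ y) ` ?W) = card ?W"
    by (rule card_image) (simp add: inj_on_def)
  ultimately show ?thesis
    by (simp add: card_lists_length_eq)
qed

lemma card_tree_level:
  assumes "1 \<le> n" "n \<le> d"
  shows "card (tree_level d n) = 5 * 4 ^ (n - 1)"
proof -
  let ?part = "\<lambda>a. {x \<in> tree_level d n. prefix [a] x}"
  have part_card: "card (?part a) = 4 ^ (n - 1)" if "a < 5" for a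
    using card_tree_level_prefix[of "[a]" d n] that assms by (simp add: tree_V_def)
  have "tree_level d n = (\<Union>a<5. ?part a)"
  proof (intro set_eqI iffI)
    fix x assume x: "x \<in> tree_level d n"
    with assms obtain b y where "x = b # y" by (cases x) (auto simp: tree_level_def)
    with x show "x \<in> (\<Union>a<5. ?part a)" by (auto simp: tree_level_def tree_V_def)
  qed auto
  moreover have "card (\<Union>a<5. ?part a) = (\<Sum>a<5. card (?part a))"
    using part_card by (intro card_UN_disjoint) (auto intro: card_ge_0_finite simp: prefix_def)
  ultimately show ?thesis using part_card by simp
qed

lemma sum_four_power_longest_common_prefix:
  assumes u: "u \<in> tree_V d" and n: "1 \<le> n" "n \<le> d"
  shows "(\<Sum>x\<in>tree_level d n. 4 ^ length (longest_common_prefix u x))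
           = 4 ^ (n - 1) * (5 + 3 * min (length u) n)"
proof -
  define m where "m = min (length u) n"
  let ?c = "\<lambda>x. length (longest_common_prefix u x)"
  have fin: "finite (tree_level d n)"
    using card_tree_level[OF n] card_ge_0_finite by force
  have bound: "\<forall>x\<in>tree_level d n. ?c x \<le> m"
    using prefix_length_le[OF longest_common_prefix_prefix1]
      prefix_length_le[OF longest_common_prefix_prefix2]
    by (auto simp: m_def tree_level_def)
  have "(\<Sum>x\<in>tree_level d n. (3 + 1) ^ ?c x)
      = card (tree_level d n) + 3 * (\<Sum>j<m. (3 + 1) ^ j * card {x \<in> tree_level d n. j < ?c x})"
    by (rule sum_power_layers[OF fin bound])
  also have "(\<Sum>j<m. (3 + 1) ^ j * card {x \<in> tree_level d n. j < ?c x}) = (\<Sum>j<m. 4 ^ (n - 1))"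
  proof (rule sum.cong[OF refl])
    fix j assume "j \<in> {..<m}"
    then have j: "Suc j \<le> length u" "Suc j \<le> n" by (auto simp: m_def)
    have "{x \<in> tree_level d n. j < ?c x} = {x \<in> tree_level d n. prefix (take (Suc j) u) x}"
      using le_length_longest_common_prefix_iff[OF j(1)] by (auto simp: Suc_le_eq)
    moreover have "u \<noteq> []" using j by auto
    ultimately have "card {x \<in> tree_level d n. j < ?c x} = 4 ^ (n - Suc j)"
      using card_tree_level_prefix[OF take_in_tree_V[OF u], of "Suc j" n] j n
      by (simp add: min_absorb2)
    moreover have "j + (n - Suc j) = n - 1" using j by simp
    ultimately show "(3 + 1) ^ j * card {x \<in> tree_level d n. j < ?c x} = (4::nat) ^ (n - 1)"
      by (simp flip: power_add)
  qed
  finally show ?thesis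
    using card_tree_level[OF n] by (simp add: m_def algebra_simps)
qed

section \<open>The numerical estimate\<close>

lemma two_power_mult_linear_antimono:
  "i \<le> j \<Longrightarrow> j \<le> d \<Longrightarrow> 2 ^ (d - j) * (5 + 3 * j) \<le> 2 ^ (d - i) * (5 + 3 * (i::nat))"
proof (induction j rule: dec_induct)
  case (step j)
  then have "(2::nat) ^ (d - j) = 2 * 2 ^ (d - Suc j)"
    by (metis Suc_diff_Suc Suc_le_lessD power_Suc)
  then have "2 ^ (d - Suc j) * (5 + 3 * Suc j) \<le> (2::nat) ^ (d - j) * (5 + 3 * j)"
    by simp
  with step show ?case by simp
qed simp

lemma two_power_le_level_factor:
  fixes d h k :: nat
  assumes H: "2 ^ (2 * h + 1) + 3 * h \<le> 3 * d + 3" and k: "k \<le> d"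
  shows "2 ^ (2 * h + 1) \<le> 2 ^ (d - k) * (5 + 3 * min k (d - h))"
proof (cases "d - h \<le> k")
  case True
  have "2 ^ (2 * h + 1) \<le> 5 + 3 * (d - h)" using H by simp
  also have "\<dots> \<le> 2 ^ (d - k) * (5 + 3 * min k (d - h))" using True by simp
  finally show ?thesis .
next
  case False
  \<comment> \<open>the right-hand side decreases in k, so the worst case is k = d - h - 1\<close>
  have "(2::nat) ^ h < 2 ^ (2 * h + 1)" by (rule power_strict_increasing) auto
  then have "2 ^ h \<le> 3 * (d - h) + 2" using H by simp
  have "(2::nat) ^ (2 * h + 1) = 2 ^ (h + 1) * 2 ^ h"
    by (simp flip: power_add)
  also have "\<dots> \<le> 2 ^ (h + 1) * (3 * (d - h) + 2)"
    using \<open>2 ^ h \<le> 3 * (d - h) + 2\<close> by (rule mult_le_mono2)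
  also have "\<dots> = 2 ^ (d - (d - h - 1)) * (5 + 3 * (d - h - 1))"
    using False by (simp add: Suc_diff_Suc numeral_eq_Suc)
  also have "\<dots> \<le> 2 ^ (d - k) * (5 + 3 * k)"
    using False by (intro two_power_mult_linear_antimono) auto
  finally show ?thesis using False by simp
qed

lemma two_power_le_level_weight:
  fixes d h k :: nat
  assumes H: "2 ^ (2 * h + 1) + 3 * h \<le> 3 * d + 3" and k: "k \<le> d" and n: "1 \<le> d - h"
  shows "2 ^ (k + d) \<le> 2 * 4 ^ (d - h - 1) * (5 + 3 * min k (d - h))"
proof -
  let ?W = "5 + 3 * min k (d - h)"
  have "2 * d = (2 * h + 1) + Suc (2 * (d - h - 1))"
    using n by simp
  then have exp: "2 ^ (2 * d) = (2::nat) ^ (2 * h + 1) * (2 * 4 ^ (d - h - 1))"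
    by (simp only: power_add power_Suc power_mult) simp
  have "2 ^ (2 * h + 1) * 2 ^ (k + d) \<le> 2 ^ (d - k) * ?W * 2 ^ (k + d)"
    using two_power_le_level_factor[OF H k] by simp
  also have "\<dots> = 2 ^ (2 * d) * ?W"
    using k by (simp flip: power_add)
  also have "\<dots> = 2 ^ (2 * h + 1) * (2 * 4 ^ (d - h - 1) * ?W)"
    by (simp add: exp)
  finally show ?thesis by simp
qed

lemma four_power_div_two_power:
  "2 * e \<le> N \<Longrightarrow> 2 / 2 ^ N * 4 ^ e = (2::real) / 2 ^ (N - 2 * e)"
  by (simp add: power_mult power_diff)

section \<open>One selected leaf below each vertex of a level\<close>

context
  fixes d n :: nat and S :: "nat list set"
  assumes S_leaves: "S \<subseteq> tree_level d d"
    and unique_below: "\<forall>v\<in>tree_level d n. card {x \<in> S. prefix v x} = 1"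
    and n: "1 \<le> n" "n \<le> d"
begin

lemma bij_betw_take_level: "bij_betw (take n) S (tree_level d n)"
proof (rule bij_betw_imageI)
  show "inj_on (take n) S"
  proof (rule inj_onI)
    fix v w assume "v \<in> S" "w \<in> S" "take n v = take n w"
    moreover have "take n v \<in> tree_level d n"
      using \<open>v \<in> S\<close> S_leaves n take_in_tree_V by (auto simp: tree_level_def)
    ultimately have "v \<in> {x \<in> S. prefix (take n v) x}" "w \<in> {x \<in> S. prefix (take n v) x}"
      by (metis (mono_tags, lifting) mem_Collect_eq take_is_prefix)+
    then show "v = w"
      using unique_below \<open>take n v \<in> tree_level d n\<close> by (metis card_1_singletonE singletonD)
  qed
  show "take n ` S = tree_level d n"
  proof (intro set_eqI iffI)
    fix x assume "x \<in> take n ` S"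
    then show "x \<in> tree_level d n"
      using S_leaves n take_in_tree_V by (auto simp: tree_level_def)
  next
    fix x assume x: "x \<in> tree_level d n"
    then obtain v where "v \<in> S" "prefix x v"
      using unique_below by (metis (no_types, lifting) card_1_singletonE mem_Collect_eq singletonI)
    moreover have "take n v = x"
      using \<open>prefix x v\<close> x by (auto simp: tree_level_def prefix_def)
    ultimately show "x \<in> take n ` S" by blast
  qed
qed

lemma exp_weight_ge_level_sum:
  assumes u: "u \<in> tree_V d" "u \<notin> S"
  shows "2 / 2 ^ (length u + d) * (\<Sum>x\<in>tree_level d n. 4 ^ length (longest_common_prefix u x))
           \<le> exp_weight (tree_V d) (tree_E d) S u"
proof -
  let ?c = "\<lambda>x. length (longest_common_prefix u x)"
  have "2 / 2 ^ (length u + d) * 4 ^ ?c (take n v)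
          \<le> half_pow (dist_GS (tree_V d) (tree_E d) S u v)" if v: "v \<in> S" for v
  proof -
    have "prefix (longest_common_prefix u (take n v)) (longest_common_prefix u v)"
      by (meson longest_common_prefix_max_prefix longest_common_prefix_prefix1
          longest_common_prefix_prefix2 prefix_order.trans take_is_prefix)
    then have le: "?c (take n v) \<le> ?c v" by (rule prefix_length_le)
    have "?c v \<le> length u" by (simp add: prefix_length_le longest_common_prefix_prefix1)
    then have "2 * ?c v \<le> length u + d"
      using v S_leaves prefix_length_le[OF longest_common_prefix_prefix2, of u v]
      by (auto simp: tree_level_def)
    have "2 / 2 ^ (length u + d) * 4 ^ ?c (take n v) \<le> 2 / 2 ^ (length u + d) * (4::real) ^ ?c v"
      using le by (intro mult_left_mono power_increasing) auto
    also have "\<dots> = 2 / 2 ^ (length u + d - 2 * ?c v)"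
      using \<open>2 * ?c v \<le> length u + d\<close> by (rule four_power_div_two_power)
    also have "\<dots> \<le> half_pow (dist_GS (tree_V d) (tree_E d) S u v)"
      using dist_GS_tree_le[of S d u v] S_leaves u v half_pow_ge by (simp add: tree_level_def)
    finally show ?thesis .
  qed
  then have "(\<Sum>v\<in>S. 2 / 2 ^ (length u + d) * 4 ^ ?c (take n v)) \<le> exp_weight (tree_V d) (tree_E d) S u"
    unfolding exp_weight_def by (rule sum_mono)
  moreover have "(\<Sum>v\<in>S. (4::real) ^ ?c (take n v)) = (\<Sum>x\<in>tree_level d n. 4 ^ ?c x)"
    using bij_betw_take_level by (rule sum.reindex_bij_betw)
  ultimately show ?thesis
    by (simp only: sum_distrib_left[symmetric])
qed

lemma exp_dominating_leaf_selection:
  assumes h: "n = d - h" "2 ^ (2 * h + 1) + 3 * h \<le> 3 * d + 3"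
  shows "exp_dominating (tree_V d) (tree_E d) S"
proof -
  have fin: "finite S"
    using bij_betw_finite[OF bij_betw_take_level] card_tree_level[OF n] card_ge_0_finite by force
  have "1 \<le> exp_weight (tree_V d) (tree_E d) S u" if u: "u \<in> tree_V d" for u
  proof (cases "u \<in> S")
    case True
    then show ?thesis using exp_weight_ge_two_if_mem[OF fin True u, of "tree_E d"] by simp
  next
    case False
    let ?k = "length u" and ?c = "\<lambda>x. length (longest_common_prefix u x)"
    have "?k \<le> d" using u by (simp add: tree_V_def)
    then have "2 ^ (?k + d) \<le> 2 * 4 ^ (n - 1) * (5 + 3 * min ?k n)"
      using two_power_le_level_weight h n by simp
    then have "real (2 ^ (?k + d)) \<le> real (2 * (4 ^ (n - 1) * (5 + 3 * min ?k n)))"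
      by (simp only: of_nat_le_iff mult.assoc)
    then have "1 \<le> 2 / 2 ^ (?k + d) * real (4 ^ (n - 1) * (5 + 3 * min ?k n))"
      by (simp only: of_nat_mult of_nat_power of_nat_numeral) (simp add: le_divide_eq)
    also have "\<dots> = 2 / 2 ^ (?k + d) * real (\<Sum>x\<in>tree_level d n. 4 ^ ?c x)"
      by (simp only: sum_four_power_longest_common_prefix[OF u n])
    also have "\<dots> = 2 / 2 ^ (?k + d) * (\<Sum>x\<in>tree_level d n. 4 ^ ?c x)"
      by simp
    also have "\<dots> \<le> exp_weight (tree_V d) (tree_E d) S u"
      using exp_weight_ge_level_sum[OF u False] .
    finally show ?thesis .
  qed
  then show ?thesis
    using S_leaves by (auto simp: exp_dominating_def tree_level_def)
qed

end

theorem mainTheorem15: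
  fixes d h :: nat and S :: "nat list set"
  assumes "d > 0" and "h > 0"
    and "real d \<ge> 4/3 * 2 ^ (2*h - 1) + real h - 1"
    and "S \<subseteq> {x \<in> tree_V d. length x = d}"
    and "card S = 5 * 4 ^ (d - h - 1)"
    and "\<forall>v\<in>tree_V d. length v = d - h \<longrightarrow> card {x\<in>S. prefix v x} = 1"
  shows "exp_dominating (tree_V d) (tree_E d) S \<and>
         gamma_e (tree_V d) (tree_E d) \<le> 5 * 4 ^ (d - h - 1)"
proof -
  have "(2::real) ^ (2 * h + 1) = 4 * 2 ^ (2 * h - 1)"
    using assms(2) by (cases h) simp_all
  then have "real (2 ^ (2 * h + 1) + 3 * h) \<le> real (3 * d + 3)"
    using assms(3) by (simp only: of_nat_add of_nat_mult of_nat_power of_nat_numeral)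
  then have H: "2 ^ (2 * h + 1) + 3 * h \<le> 3 * d + 3"
    by (simp only: of_nat_le_iff)
  moreover have "(2::nat) ^ 3 \<le> 2 ^ (2 * h + 1)"
    using assms(2) by (intro power_increasing) auto
  ultimately have "1 \<le> d - h" by simp
  then have "exp_dominating (tree_V d) (tree_E d) S"
    using exp_dominating_leaf_selection[of S d "d - h" h] H assms(4,6)
    by (simp add: tree_level_def)
  with gamma_e_le_card assms(5) show ?thesis by metis
qed

end
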